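(* Let $R\in C^1(\mathbb{R}^3;SO(3))$ be such that $\operatorname{curl}R=\alpha$ on $\mathbb{R}^3$ for some constant $\alpha\in\mathbb{R}^{3\times3}$. Then $\alpha=0$ and $R$ is constant.
   Context: $SO(3)$ is the group of $3\times3$ rotation matrices. For a matrix field $R$, $\operatorname{curl}$ is applied row-wise: $(\operatorname{curl}R)_{ij}=\varepsilon_{jkl}\partial_kR_{il}$ (Einstein summation, $\varepsilon_{jkl}$ the sign of the permutation $(jkl)$). *)

theory Defs
  imports "HOL-Analysis.Analysis"
begin

definition partial :: "(real^3 \<Rightarrow> 'b::real_normed_vector) \<Rightarrow> 3 \<Rightarrow> real^3 \<Rightarrow> 'b" where
  "partial f k x = frechet_derivative f (at x) (axis k 1)"

definition C1_on_R3 :: "(real^3 \<Rightarrow> 'b::real_normed_vector) \<Rightarrow> bool" where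
  "C1_on_R3 f \<longleftrightarrow> (\<forall>x. f differentiable (at x)) \<and>
     (\<forall>k. continuous_on UNIV (partial f k))"

definition levi_civita :: "3 \<Rightarrow> 3 \<Rightarrow> 3 \<Rightarrow> real" where
  "levi_civita j k l =
    (if (j,k,l) \<in> {(1,2,3),(2,3,1),(3,1,2)} then 1
     else if (j,k,l) \<in> {(1,3,2),(3,2,1),(2,1,3)} then -1 else 0)"

definition curl :: "(real^3 \<Rightarrow> real^3^3) \<Rightarrow> real^3 \<Rightarrow> real^3^3" where
  "curl R x = (\<chi> i j. \<Sum>k\<in>UNIV. \<Sum>l\<in>UNIV.
       levi_civita j k l * partial (\<lambda>y. R y $ i $ l) k x)"

end

theory Submission
  imports Defs
begin

text \<open>Each entry of \<open>curl R\<close> is a planar curl \<open>\<partial>\<^sub>a R\<^sub>i\<^sub>b - \<partial>\<^sub>b R\<^sub>i\<^sub>a\<close> of two entries of \<open>R\<close>,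
  and the entries of a rotation are bounded by 1. Green's theorem on the square \<open>[0,L]\<^sup>2\<close> in the
  \<open>(a,b)\<close>-plane equates \<open>c L\<^sup>2\<close>, for the constant value \<open>c\<close> of that entry, with a boundary
  integral of size at most \<open>4L\<close>; letting \<open>L \<rightarrow> \<infinity>\<close> gives \<open>c = 0\<close>. So \<open>R\<close> is curl free.
  Differentiating \<open>R\<^sup>T R = I\<close> shows that \<open>B\<^sub>k = R\<^sup>T \<partial>\<^sub>k R\<close> is skew-symmetric, while
  \<open>curl R = 0\<close> says that \<open>(B\<^sub>k)\<^sub>m\<^sub>l\<close> is symmetric in \<open>k, l\<close>. A 3-tensor that is skew in one pair
  of indices and symmetric in another vanishes, so all partial derivatives of \<open>R\<close> vanish.\<close>

lemma partial_bounded_linear: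
  fixes f :: "real^3 \<Rightarrow> 'a::real_normed_vector"
  assumes "bounded_linear g" and "f differentiable (at x)"
  shows "partial (\<lambda>y. g (f y)) k x = g (partial f k x)"
proof -
  have "((\<lambda>y. g (f y)) has_derivative (\<lambda>h. g (frechet_derivative f (at x) h))) (at x)"
    using bounded_linear.has_derivative[OF assms(1) frechet_derivative_works[THEN iffD1, OF assms(2)]] .
  then show ?thesis
    unfolding partial_def by (metis frechet_derivative_at)
qed

lemma C1_on_R3_bounded_linear:
  assumes g: "bounded_linear g" and f: "C1_on_R3 f"
  shows "C1_on_R3 (\<lambda>y. g (f y))"
  unfolding C1_on_R3_def
proof safe
  show "(\<lambda>y. g (f y)) differentiable (at x)" for x
    using f bounded_linear.has_derivative[OF g] unfolding C1_on_R3_def differentiable_def by blast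
  show "continuous_on UNIV (partial (\<lambda>y. g (f y)) k)" for k
  proof -
    have "partial (\<lambda>y. g (f y)) k = (\<lambda>x. g (partial f k x))"
      using f partial_bounded_linear[OF g] unfolding C1_on_R3_def by auto
    then show ?thesis
      using f bounded_linear.continuous_on[OF g, of UNIV "partial f k"] unfolding C1_on_R3_def by simp
  qed
qed

lemma has_vector_derivative_partial:
  fixes f :: "real^3 \<Rightarrow> 'a::real_normed_vector"
  assumes "f differentiable (at (x + t *\<^sub>R axis k 1))"
  shows "((\<lambda>s. f (x + s *\<^sub>R axis k 1)) has_vector_derivative partial f k (x + t *\<^sub>R axis k 1)) (at t)"
proof -
  let ?F = "frechet_derivative f (at (x + t *\<^sub>R axis k 1))"
  have "((\<lambda>s. x + s *\<^sub>R axis k 1) has_derivative (\<lambda>s. s *\<^sub>R axis k 1)) (at t)"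
    by (auto intro!: derivative_eq_intros)
  from diff_chain_at[OF this frechet_derivative_works[THEN iffD1, OF assms]]
  have "((\<lambda>s. f (x + s *\<^sub>R axis k 1)) has_derivative (\<lambda>s. ?F (s *\<^sub>R axis k 1))) (at t)"
    by (simp add: o_def)
  moreover have "linear ?F"
    using assms frechet_derivative_works has_derivative_linear by blast
  ultimately show ?thesis
    unfolding has_vector_derivative_def partial_def by (simp add: linear_scale)
qed

lemma has_derivative_zero_if_partials_eq_0:
  fixes f :: "real^3 \<Rightarrow> 'a::real_normed_vector"
  assumes "f differentiable (at x)" and "\<And>k. partial f k x = 0"
  shows "(f has_derivative (\<lambda>h. 0)) (at x)"
proof -
  let ?F = "frechet_derivative f (at x)"
  have F: "(f has_derivative ?F) (at x)"
    using assms(1) frechet_derivative_works by blast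
  have "?F h = 0" for h
  proof -
    have "?F h = ?F (\<Sum>k\<in>UNIV. h $ k *\<^sub>R axis k 1)"
      by (metis (no_types) basis_expansion scalar_mult_eq_scaleR)
    also have "\<dots> = (\<Sum>k\<in>UNIV. h $ k *\<^sub>R partial f k x)"
      using has_derivative_linear[OF F] by (simp add: linear_sum linear_scale partial_def)
    finally show ?thesis
      by (simp add: assms(2))
  qed
  then have "?F = (\<lambda>h. 0)" ..
  then show ?thesis
    using F by simp
qed

lemma green_square_constant_curl:
  fixes P Q Pv Qu :: "real \<Rightarrow> real \<Rightarrow> real"
  assumes "0 \<le> L"
    and P: "\<And>u v. ((\<lambda>t. P u t) has_real_derivative Pv u v) (at v)"
    and Q: "\<And>u v. ((\<lambda>s. Q s v) has_real_derivative Qu u v) (at u)"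
    and Pv_cont: "continuous_on UNIV (\<lambda>(u, v). Pv u v)"
    and curl: "\<And>u v. Qu u v - Pv u v = c"
  shows "integral {0..L} (\<lambda>v. Q L v - Q 0 v) - integral {0..L} (\<lambda>u. P u L - P u 0) = c * L\<^sup>2"
proof -
  have P_int: "integral {0..L} (Pv u) = P u L - P u 0" for u
    using \<open>0 \<le> L\<close> P
    by (intro integral_unique fundamental_theorem_of_calculus)
       (auto simp: has_real_derivative_iff_has_vector_derivative intro: has_vector_derivative_at_within)
  have Q_int: "integral {0..L} (\<lambda>u. Pv u v) + c * L = Q L v - Q 0 v" for v
  proof -
    have "Pv u v + c = Qu u v" for u
      using curl[of u v] by linarith
    then have "((\<lambda>u. Q u v) has_real_derivative Pv u v + c) (at u)" for u
      using Q by simp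
    then have "((\<lambda>u. Pv u v + c) has_integral Q L v - Q 0 v) {0..L}"
      using \<open>0 \<le> L\<close>
      by (intro fundamental_theorem_of_calculus)
         (auto simp: has_real_derivative_iff_has_vector_derivative intro: has_vector_derivative_at_within)
    then have "((\<lambda>u. Pv u v) has_integral Q L v - Q 0 v - c * L) {0..L}"
      using has_integral_diff[OF _ has_integral_const_real[of c 0 L]] \<open>0 \<le> L\<close> by (force simp: mult.commute)
    then show ?thesis
      by (simp add: integral_unique)
  qed
  have Pv_square: "continuous_on ({0..L} \<times> {0..L}) (\<lambda>(u, v). Pv u v)"
    by (rule continuous_on_subset[OF Pv_cont]) simp
  have "(\<lambda>v. integral {0..L} (\<lambda>u. Pv u v)) integrable_on {0..L}"
    using integral_integrable_2dim[of 0 0 L L "\<lambda>(v, u). Pv u v"] continuous_on_swap_args[OF Pv_square]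
    by (simp add: cbox_Pair_eq)
  then have "integral {0..L} (\<lambda>v. Q L v - Q 0 v) =
      integral {0..L} (\<lambda>v. integral {0..L} (\<lambda>u. Pv u v)) + c * L\<^sup>2"
    using integral_add[OF _ integrable_const_ivl[of "c * L" 0 L]] \<open>0 \<le> L\<close>
    by (simp add: Q_int[symmetric] power2_eq_square)
  also have "\<dots> = integral {0..L} (\<lambda>u. integral {0..L} (Pv u)) + c * L\<^sup>2"
    using integral_swap_continuous[of 0 0 L L Pv] Pv_square by (simp add: cbox_Pair_eq)
  also have "\<dots> = integral {0..L} (\<lambda>u. P u L - P u 0) + c * L\<^sup>2"
    by (simp add: P_int)
  finally show ?thesis
    by simp
qed

lemma abs_integral_diff_le:
  fixes f g :: "real \<Rightarrow> real"
  assumes "0 \<le> L" and "continuous_on {0..L} f" and "continuous_on {0..L} g"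
    and "\<And>t. \<bar>f t\<bar> \<le> B" and "\<And>t. \<bar>g t\<bar> \<le> B"
  shows "\<bar>integral {0..L} (\<lambda>t. f t - g t)\<bar> \<le> 2 * B * L"
proof -
  have "\<bar>f t - g t\<bar> \<le> 2 * B" for t
    using assms(4,5)[of t] by linarith
  then show ?thesis
    using integral_bound[of 0 L "\<lambda>t. f t - g t" "2 * B"] assms(1-3)
    by (auto intro: continuous_on_diff)
qed

lemma bounded_plane_field_constant_curl_eq_0:
  fixes P Q Pv Qu :: "real \<Rightarrow> real \<Rightarrow> real"
  assumes P_cont: "continuous_on UNIV (\<lambda>(u, v). P u v)"
    and Q_cont: "continuous_on UNIV (\<lambda>(u, v). Q u v)"
    and P: "\<And>u v. ((\<lambda>t. P u t) has_real_derivative Pv u v) (at v)"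
    and Q: "\<And>u v. ((\<lambda>s. Q s v) has_real_derivative Qu u v) (at u)"
    and Pv_cont: "continuous_on UNIV (\<lambda>(u, v). Pv u v)"
    and curl: "\<And>u v. Qu u v - Pv u v = c"
    and P_bound: "\<And>u v. \<bar>P u v\<bar> \<le> B" and Q_bound: "\<And>u v. \<bar>Q u v\<bar> \<le> B"
  shows "c = 0"
proof -
  have growth: "\<bar>c\<bar> * L\<^sup>2 \<le> 4 * B * L" if "0 < L" for L
  proof -
    have "continuous_on S (\<lambda>u. P u v)" for S v
      using continuous_on_compose2[OF P_cont continuous_on_Pair[OF continuous_on_id continuous_on_const]] by simp
    then have "\<bar>integral {0..L} (\<lambda>u. P u L - P u 0)\<bar> \<le> 2 * B * L"
      using \<open>0 < L\<close> P_bound by (intro abs_integral_diff_le) auto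
    moreover have "continuous_on S (\<lambda>v. Q u v)" for S u
      using continuous_on_compose2[OF Q_cont continuous_on_Pair[OF continuous_on_const continuous_on_id]] by simp
    then have "\<bar>integral {0..L} (\<lambda>v. Q L v - Q 0 v)\<bar> \<le> 2 * B * L"
      using \<open>0 < L\<close> Q_bound by (intro abs_integral_diff_le) auto
    ultimately show ?thesis
      using green_square_constant_curl[OF _ P Q Pv_cont curl, of L] \<open>0 < L\<close>
      by (auto simp: abs_mult)
  qed
  show "c = 0"
  proof (rule ccontr)
    assume "c \<noteq> 0"
    define L where "L = (4 * \<bar>B\<bar> + 1) / \<bar>c\<bar>"
    have "0 < L" and "\<bar>c\<bar> * L = 4 * \<bar>B\<bar> + 1"
      using \<open>c \<noteq> 0\<close> by (auto simp: L_def)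
    then have "\<bar>c\<bar> * L\<^sup>2 = (4 * \<bar>B\<bar> + 1) * L"
      by (metis mult.assoc power2_eq_square)
    then have "4 * \<bar>B\<bar> + 1 \<le> 4 * B"
      using growth[OF \<open>0 < L\<close>] \<open>0 < L\<close> by simp
    then show False
      using abs_ge_self[of B] by linarith
  qed
qed

lemma bounded_fields_constant_curl_eq_0:
  fixes f g :: "real^3 \<Rightarrow> real"
  assumes f: "C1_on_R3 f" and g: "C1_on_R3 g"
    and f_bound: "\<And>x. \<bar>f x\<bar> \<le> B" and g_bound: "\<And>x. \<bar>g x\<bar> \<le> B"
    and curl: "\<And>x. partial g a x - partial f b x = c"
  shows "c = 0"
proof -
  let ?p = "\<lambda>u v. u *\<^sub>R axis a 1 + v *\<^sub>R axis b 1 :: real^3"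
  have plane_cont: "continuous_on UNIV (\<lambda>(u, v). h (?p u v))" if "continuous_on UNIV h" for h :: "real^3 \<Rightarrow> real"
  proof -
    have "continuous_on UNIV (\<lambda>z. h (fst z *\<^sub>R axis a 1 + snd z *\<^sub>R axis b 1))"
      by (intro continuous_on_compose2[OF that] continuous_intros) auto
    then show ?thesis
      by (simp add: case_prod_beta')
  qed
  have "continuous_on UNIV f" "continuous_on UNIV g"
    using f g unfolding C1_on_R3_def
    by (auto intro!: differentiable_imp_continuous_on differentiable_at_imp_differentiable_on)
  show ?thesis
  proof (rule bounded_plane_field_constant_curl_eq_0[where P = "\<lambda>u v. f (?p u v)" and Q = "\<lambda>u v. g (?p u v)"
        and Pv = "\<lambda>u v. partial f b (?p u v)" and Qu = "\<lambda>u v. partial g a (?p u v)"])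
    show "continuous_on UNIV (\<lambda>(u, v). f (?p u v))" "continuous_on UNIV (\<lambda>(u, v). g (?p u v))"
      "continuous_on UNIV (\<lambda>(u, v). partial f b (?p u v))"
      using plane_cont \<open>continuous_on UNIV f\<close> \<open>continuous_on UNIV g\<close> f
      unfolding C1_on_R3_def by blast+
    show "((\<lambda>t. f (?p u t)) has_real_derivative partial f b (?p u v)) (at v)" for u v
      using has_vector_derivative_partial[of f "u *\<^sub>R axis a 1" v b] f
      by (simp add: C1_on_R3_def has_real_derivative_iff_has_vector_derivative)
    show "((\<lambda>s. g (?p s v)) has_real_derivative partial g a (?p u v)) (at u)" for u v
      using has_vector_derivative_partial[of g "v *\<^sub>R axis b 1" u a] g
      by (simp add: C1_on_R3_def has_real_derivative_iff_has_vector_derivative add.commute)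
  qed (use curl f_bound g_bound in auto)
qed

lemma bounded_linear_matrix_nth: "bounded_linear (\<lambda>A::'a::real_normed_vector^'n^'m. A $ i $ j)"
  using bounded_linear_compose[OF bounded_linear_vec_nth bounded_linear_vec_nth] .

lemma orthogonal_matrix_nth_abs_le_1:
  fixes M :: "real^'n^'n"
  assumes "orthogonal_matrix M"
  shows "\<bar>M $ i $ j\<bar> \<le> 1"
  using component_le_norm_cart[of "column j M" i] assms
  by (simp add: orthogonal_matrix_orthonormal_columns column_def)

lemma orthogonal_matrix_field_partial_skew:
  fixes R :: "real^3 \<Rightarrow> real^'n^'n"
  assumes orth: "\<And>y. orthogonal_matrix (R y)" and diff: "R differentiable (at x)"
  shows "transpose (partial R k x) ** R x + transpose (R x) ** partial R k x = 0"
proof -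
  let ?D = "partial R k x" and ?R = "\<lambda>t. R (x + t *\<^sub>R axis k 1)"
  have entry_deriv: "((\<lambda>t. ?R t $ i $ j) has_real_derivative ?D $ i $ j) (at 0)" for i j
  proof -
    have "(\<lambda>y. R y $ i $ j) differentiable (at x)"
      using bounded_linear.has_derivative[OF bounded_linear_matrix_nth] diff
      unfolding differentiable_def by blast
    from has_vector_derivative_partial[of "\<lambda>y. R y $ i $ j" x 0 k, simplified, OF this]
    show ?thesis
      by (simp add: has_real_derivative_iff_has_vector_derivative
          partial_bounded_linear[OF bounded_linear_matrix_nth diff])
  qed
  have "(\<lambda>t. \<Sum>i\<in>UNIV. ?R t $ i $ j * ?R t $ i $ l) = (\<lambda>t. mat 1 $ j $ l)" for j l
  proof -
    have "(transpose (R y) ** R y) $ j $ l = mat 1 $ j $ l" for y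
      using orth[of y] by (simp add: orthogonal_matrix)
    then show ?thesis
      by (simp add: matrix_matrix_mult_def transpose_def)
  qed
  then have "((\<lambda>t. \<Sum>i\<in>UNIV. ?R t $ i $ j * ?R t $ i $ l) has_real_derivative 0) (at 0)" for j l
    by simp
  moreover have "((\<lambda>t. \<Sum>i\<in>UNIV. ?R t $ i $ j * ?R t $ i $ l) has_real_derivative
      (\<Sum>i\<in>UNIV. ?D $ i $ j * R x $ i $ l + R x $ i $ j * ?D $ i $ l)) (at 0)" for j l
    using entry_deriv by (auto intro!: DERIV_sum derivative_eq_intros)
  ultimately have "(\<Sum>i\<in>UNIV. ?D $ i $ j * R x $ i $ l + R x $ i $ j * ?D $ i $ l) = 0" for j l
    using DERIV_unique by blast
  then show ?thesis
    by (simp add: vec_eq_iff matrix_matrix_mult_def transpose_def sum.distrib)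
qed

lemma skew_symmetric_tensor_eq_0:
  fixes B :: "'a \<Rightarrow> 'a \<Rightarrow> 'a \<Rightarrow> real"
  assumes skew: "\<And>k m l. B k m l = - B k l m" and symm: "\<And>k m l. B k m l = B l m k"
  shows "B k m l = 0"
proof -
  have "B k m l = - B k l m" by (rule skew)
  also have "\<dots> = - B m l k" using symm[of k l m] by simp
  also have "\<dots> = B m k l" using skew[of m k l] by simp
  also have "\<dots> = B l k m" by (rule symm)
  also have "\<dots> = - B l m k" by (rule skew)
  also have "\<dots> = - B k m l" using symm[of l m k] by simp
  finally show ?thesis by simp
qed

lemma orthogonal_skew_symmetric_derivatives_eq_0:
  fixes M :: "real^'n^'n" and D :: "'n \<Rightarrow> real^'n^'n"
  assumes orth: "orthogonal_matrix M"
    and skew: "\<And>k. transpose (D k) ** M + transpose M ** D k = 0"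
    and symm: "\<And>i k l. D k $ i $ l = D l $ i $ k"
  shows "D k = 0"
proof -
  define B where "B k = transpose M ** D k" for k
  have "B k $ m $ l = 0" for m l
  proof (rule skew_symmetric_tensor_eq_0[where B = "\<lambda>k m l. B k $ m $ l"])
    show "B k $ m $ l = - B k $ l $ m" for k m l
    proof -
      have "(transpose (D k) ** M + transpose M ** D k) $ l $ m = 0"
        using skew[of k] by simp
      then show ?thesis
        by (simp add: B_def matrix_matrix_mult_def transpose_def mult.commute eq_neg_iff_add_eq_0)
    qed
    show "B k $ m $ l = B l $ m $ k" for k m l
      by (simp add: B_def matrix_matrix_mult_def transpose_def symm[of k _ l])
  qed
  then have "transpose M ** D k = 0"
    by (simp add: B_def vec_eq_iff)
  have "D k = (M ** transpose M) ** D k"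
    using orth by (simp add: orthogonal_matrix_def matrix_mul_lid)
  also have "\<dots> = M ** (transpose M ** D k)"
    by (rule matrix_mul_assoc[symmetric])
  also have "\<dots> = 0"
    using \<open>transpose M ** D k = 0\<close> by simp
  finally show ?thesis .
qed

text \<open>Indices of type \<open>3\<close> are added modulo 3, so \<open>(j, j + 1, j + 2)\<close> runs through the cyclic
  permutations of \<open>(1, 2, 3)\<close>, on which \<open>levi_civita\<close> is 1.\<close>

lemma numeral_wrap_3: "(4::3) = 1" "(5::3) = 2"
  by simp_all

lemma curl_nth:
  "curl R x $ i $ j = partial (\<lambda>y. R y $ i $ (j + 2)) (j + 1) x - partial (\<lambda>y. R y $ i $ (j + 1)) (j + 2) x"
  using exhaust_3[of j] by (auto simp: curl_def levi_civita_def sum_3 numeral_wrap_3)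

lemma curl_eq_0_imp_partials_symmetric:
  assumes "curl R x = 0"
  shows "partial (\<lambda>y. R y $ i $ l) k x = partial (\<lambda>y. R y $ i $ k) l x"
proof -
  have symm: "partial (\<lambda>y. R y $ i $ (j + 2)) (j + 1) x = partial (\<lambda>y. R y $ i $ (j + 1)) (j + 2) x" for j
    using curl_nth[of R x i j] assms by simp
  show ?thesis
    using symm[of 1] symm[of 2] symm[of 3] exhaust_3[of k] exhaust_3[of l] by (auto simp: numeral_wrap_3)
qed

theorem theorem4p1:
  fixes R :: "real^3 \<Rightarrow> real^3^3" and \<alpha> :: "real^3^3"
  assumes "C1_on_R3 R"
    and "\<And>x. rotation_matrix (R x)"
    and "\<And>x. curl R x = \<alpha>"
  shows "\<alpha> = 0 \<and> (\<exists>R0. \<forall>x. R x = R0)"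
proof -
  have diff: "R differentiable (at x)" for x
    using assms(1) by (simp add: C1_on_R3_def)
  have orth: "orthogonal_matrix (R x)" for x
    using assms(2) by (simp add: rotation_matrix_def)
  have entry_C1: "C1_on_R3 (\<lambda>y. R y $ i $ j)" for i j
    using C1_on_R3_bounded_linear[OF bounded_linear_matrix_nth assms(1)] .
  have "\<alpha> $ i $ j = 0" for i j
  proof (rule bounded_fields_constant_curl_eq_0[OF entry_C1 entry_C1])
    show "partial (\<lambda>y. R y $ i $ (j + 2)) (j + 1) x - partial (\<lambda>y. R y $ i $ (j + 1)) (j + 2) x = \<alpha> $ i $ j"
      for x using curl_nth[of R x i j] assms(3)[of x] by simp
  qed (rule orthogonal_matrix_nth_abs_le_1[OF orth])+
  then have "\<alpha> = 0"
    by (simp add: vec_eq_iff)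
  have "partial R k x = 0" for k x
  proof (rule orthogonal_skew_symmetric_derivatives_eq_0[of "R x" "\<lambda>k. partial R k x"])
    show "partial R k x $ i $ l = partial R l x $ i $ k" for i k l
      using curl_eq_0_imp_partials_symmetric[of R x i l k] assms(3) \<open>\<alpha> = 0\<close>
      by (simp add: partial_bounded_linear[OF bounded_linear_matrix_nth diff])
  qed (use orth orthogonal_matrix_field_partial_skew[OF orth diff] in auto)
  then have "(R has_derivative (\<lambda>h. 0)) (at x)" for x
    using has_derivative_zero_if_partials_eq_0[OF diff] by blast
  then show ?thesis
    using has_derivative_zero_constant[of UNIV R] \<open>\<alpha> = 0\<close> by auto
qed

end
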